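(* Let $(X,P,o)$ be a generalized parametric metric space such that $P$ satisfies (P5) and $o$ is continuous. Then $(X,\tau_P)$ is a Hausdorff topological space.
   Context: A binary operation $o:[0,\infty)\times[0,\infty)\to[0,\infty)$ (written $\alpha\, o\, \beta$) is assumed to satisfy, for all $\alpha,\beta,\gamma\in[0,\infty)$: (a) $\alpha\, o\, 0=\alpha$; (b) $\alpha\le\beta\implies \alpha\, o\,\gamma\le\beta\, o\,\gamma$; (c) $\alpha\, o\,\gamma=\gamma\, o\,\alpha$; (d) $\alpha\, o\,(\beta\, o\,\gamma)=(\alpha\, o\,\beta)\, o\,\gamma$. It is continuous if whenever $\alpha_n\to\alpha$ and $\beta_n\to\beta$ in $[0,\infty)$ we have $\alpha_n\, o\,\beta_n\to\alpha\, o\,\beta$. A generalized parametric metric on a nonempty set $X$ is a function $P:X\times X\times(0,\infty)\to[0,\infty)$ such that: (P1) $P(a,b,t)=0$ for all $t>0$ if and only if $a=b$; (P2) $P(a,b,t)=P(b,a,t)$ for all $a,b\in X$, $t>0$; (P3) $P(a,b,s+t)\le P(a,x,s)\, o\, P(b,x,t)$ for all $s,t>0$ and $a,b,x\in X$. The triple $(X,P,o)$ is a generalized parametric metric space. Condition (P5): for all $a,b\in X$, the map $t\mapsto P(a,b,t)$ is continuous on $(0,\infty)$. Open ball: $B(a,\alpha,t)=\{b\in X: P(a,b,t)<\alpha\}$. $\tau_P$ is the topology consisting of all $A\subseteq X$ such that for every $a\in A$ there exist $\alpha>0,t>0$ with $B(a,\alpha,t)\subseteq A$. *)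

theory Defs
  imports "HOL-Analysis.Analysis"
begin

definition binop_axioms :: "(real \<Rightarrow> real \<Rightarrow> real) \<Rightarrow> bool" where
  "binop_axioms op \<longleftrightarrow>
     (\<forall>a\<ge>0. \<forall>b\<ge>0. op a b \<ge> 0) \<and>
     (\<forall>a\<ge>0. op a 0 = a) \<and>
     (\<forall>a b c. 0 \<le> a \<and> a \<le> b \<and> 0 \<le> c \<longrightarrow> op a c \<le> op b c) \<and>
     (\<forall>a\<ge>0. \<forall>c\<ge>0. op a c = op c a) \<and>
     (\<forall>a\<ge>0. \<forall>b\<ge>0. \<forall>c\<ge>0. op a (op b c) = op (op a b) c)"

definition binop_continuous :: "(real \<Rightarrow> real \<Rightarrow> real) \<Rightarrow> bool" where
  "binop_continuous op \<longleftrightarrow>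
     (\<forall>a b (as :: nat \<Rightarrow> real) bs. (\<forall>n. as n \<ge> 0 \<and> bs n \<ge> 0) \<and> a \<ge> 0 \<and> b \<ge> 0 \<and>
        as \<longlonglongrightarrow> a \<and> bs \<longlonglongrightarrow> b \<longrightarrow> (\<lambda>n. op (as n) (bs n)) \<longlonglongrightarrow> op a b)"

definition gen_param_metric :: "'a set \<Rightarrow> ('a \<Rightarrow> 'a \<Rightarrow> real \<Rightarrow> real) \<Rightarrow> (real \<Rightarrow> real \<Rightarrow> real) \<Rightarrow> bool" where
  "gen_param_metric X P op \<longleftrightarrow>
     X \<noteq> {} \<and> binop_axioms op \<and>
     (\<forall>a\<in>X. \<forall>b\<in>X. \<forall>t>0. P a b t \<ge> 0) \<and>
     (\<forall>a\<in>X. \<forall>b\<in>X. (\<forall>t>0. P a b t = 0) \<longleftrightarrow> a = b) \<and>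
     (\<forall>a\<in>X. \<forall>b\<in>X. \<forall>t>0. P a b t = P b a t) \<and>
     (\<forall>a\<in>X. \<forall>b\<in>X. \<forall>x\<in>X. \<forall>s>0. \<forall>t>0. P a b (s + t) \<le> op (P a x s) (P b x t))"

definition P5 :: "'a set \<Rightarrow> ('a \<Rightarrow> 'a \<Rightarrow> real \<Rightarrow> real) \<Rightarrow> bool" where
  "P5 X P \<longleftrightarrow> (\<forall>a\<in>X. \<forall>b\<in>X. continuous_on {0<..} (P a b))"

definition pball :: "'a set \<Rightarrow> ('a \<Rightarrow> 'a \<Rightarrow> real \<Rightarrow> real) \<Rightarrow> 'a \<Rightarrow> real \<Rightarrow> real \<Rightarrow> 'a set" where
  "pball X P a \<alpha> t = {b\<in>X. P a b t < \<alpha>}"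

definition tau_P :: "'a set \<Rightarrow> ('a \<Rightarrow> 'a \<Rightarrow> real \<Rightarrow> real) \<Rightarrow> 'a set set" where
  "tau_P X P = {A. A \<subseteq> X \<and> (\<forall>a\<in>A. \<exists>\<alpha>>0. \<exists>t>0. pball X P a \<alpha> t \<subseteq> A)}"

end

theory Submission
  imports Defs
begin

(* Since P a a t = 0, the triangle inequality makes P a b antitone in t, so tau_P is closed
   under finite intersections. Continuity of o at (P a x s, 0) together with (P5) fits a small
   ball around any point x of B(a, alpha, s) into that ball, so balls are open. Continuity of o
   at (0, 0) gives delta o delta < P a b (2 s) for small delta > 0, and then the balls of radius
   delta and parameter s around distinct points a, b are disjoint. *)

lemma binop_continuous_eventually_less:
  assumes "binop_continuous op" and "binop_axioms op"
    and "u \<longlonglongrightarrow> x" and "d \<longlonglongrightarrow> 0" and "\<And>n. u n \<ge> 0" and "\<And>n. d n \<ge> 0" and "x < \<alpha>"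
  shows "\<exists>n. op (u n) (d n) < \<alpha>"
proof -
  have "x \<ge> 0"
    using assms(3) by (rule LIMSEQ_le_const) (use assms(5) in blast)
  then have "(\<lambda>n. op (u n) (d n)) \<longlonglongrightarrow> op x 0"
    using assms(1,3-6) unfolding binop_continuous_def by auto
  also have "op x 0 = x"
    using assms(2) \<open>x \<ge> 0\<close> unfolding binop_axioms_def by auto
  finally have "eventually (\<lambda>n. op (u n) (d n) < \<alpha>) sequentially"
    using assms(7) by (rule order_tendstoD(2))
  then show ?thesis
    by (auto simp: eventually_sequentially)
qed

lemma exists_pos_op_self_less:
  assumes "binop_continuous op" and "binop_axioms op" and "\<epsilon> > 0"
  shows "\<exists>\<delta>>0. op \<delta> \<delta> < \<epsilon>"
proof -
  define d where "d = (\<lambda>n. inverse (real (Suc n)))"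
  have d: "d \<longlonglongrightarrow> 0" "\<And>n. 0 < d n"
    unfolding d_def by (rule LIMSEQ_inverse_real_of_nat) simp
  then obtain N where "op (d N) (d N) < \<epsilon>"
    using binop_continuous_eventually_less[OF assms(1,2) d(1) d(1) _ _ assms(3)] less_imp_le
    by blast
  then show ?thesis
    using d(2) by blast
qed

lemma tau_PI:
  "A \<subseteq> X \<Longrightarrow> (\<And>a. a \<in> A \<Longrightarrow> \<exists>\<alpha>>0. \<exists>t>0. pball X P a \<alpha> t \<subseteq> A) \<Longrightarrow> A \<in> tau_P X P"
  by (simp add: tau_P_def)

lemma tau_P_subset: "A \<in> tau_P X P \<Longrightarrow> A \<subseteq> X"
  by (simp add: tau_P_def)

lemma tau_PD: "A \<in> tau_P X P \<Longrightarrow> a \<in> A \<Longrightarrow> \<exists>\<alpha>>0. \<exists>t>0. pball X P a \<alpha> t \<subseteq> A"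
  by (simp add: tau_P_def)

locale gen_param_metric_space =
  fixes X :: "'a set" and P :: "'a \<Rightarrow> 'a \<Rightarrow> real \<Rightarrow> real" and op :: "real \<Rightarrow> real \<Rightarrow> real"
  assumes gen_param_metric: "gen_param_metric X P op"
begin

lemma binop_axioms: "binop_axioms op"
  using gen_param_metric by (simp add: gen_param_metric_def)

lemma op_zero_right: "a \<ge> 0 \<Longrightarrow> op a 0 = a"
  using binop_axioms unfolding binop_axioms_def by blast

lemma op_mono_left: "0 \<le> a \<Longrightarrow> a \<le> b \<Longrightarrow> 0 \<le> c \<Longrightarrow> op a c \<le> op b c"
  using binop_axioms by (simp add: binop_axioms_def)

lemma op_commute: "a \<ge> 0 \<Longrightarrow> c \<ge> 0 \<Longrightarrow> op a c = op c a"
  using binop_axioms by (simp add: binop_axioms_def)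

lemma op_mono_right:
  assumes "0 \<le> a" "a \<le> b" "0 \<le> c"
  shows "op c a \<le> op c b"
  using op_mono_left[OF assms] op_commute[of a c] op_commute[of b c] assms by simp

lemma P_nonneg: "a \<in> X \<Longrightarrow> b \<in> X \<Longrightarrow> t > 0 \<Longrightarrow> P a b t \<ge> 0"
  using gen_param_metric by (simp add: gen_param_metric_def)

lemma P_self: "a \<in> X \<Longrightarrow> t > 0 \<Longrightarrow> P a a t = 0"
  using gen_param_metric unfolding gen_param_metric_def by blast

lemma P_separates: "a \<in> X \<Longrightarrow> b \<in> X \<Longrightarrow> a \<noteq> b \<Longrightarrow> \<exists>t>0. P a b t > 0"
  using gen_param_metric P_nonneg unfolding gen_param_metric_def by (metis order_less_le)

lemma P_sym: "a \<in> X \<Longrightarrow> b \<in> X \<Longrightarrow> t > 0 \<Longrightarrow> P a b t = P b a t"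
  using gen_param_metric by (simp add: gen_param_metric_def)

lemma P_triangle:
  "a \<in> X \<Longrightarrow> b \<in> X \<Longrightarrow> x \<in> X \<Longrightarrow> s > 0 \<Longrightarrow> t > 0 \<Longrightarrow> P a b (s + t) \<le> op (P a x s) (P b x t)"
  using gen_param_metric by (simp add: gen_param_metric_def)

lemma P_antimono:
  assumes "a \<in> X" "b \<in> X" "0 < s" "s \<le> t"
  shows "P a b t \<le> P a b s"
proof (cases "s = t")
  case False
  then have "t - s > 0" using assms by simp
  then have "P a b (s + (t - s)) \<le> op (P a b s) (P b b (t - s))"
    using P_triangle assms by blast
  also have "\<dots> = P a b s"
    using P_self P_nonneg op_zero_right assms \<open>t - s > 0\<close> by simp
  finally show ?thesis by simp
qed simp

lemma pball_antimono:
  "a \<in> X \<Longrightarrow> 0 < t \<Longrightarrow> t \<le> s \<Longrightarrow> \<beta> \<le> \<alpha> \<Longrightarrow> pball X P a \<beta> t \<subseteq> pball X P a \<alpha> s"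
  using P_antimono by (fastforce simp: pball_def)

lemma pball_subset_pball:
  assumes a: "a \<in> X" and x: "x \<in> X" and r: "0 < r" "r < s"
    and small: "op (P a x (s - r)) \<delta> < \<alpha>"
  shows "pball X P x \<delta> r \<subseteq> pball X P a \<alpha> s"
proof
  fix y assume "y \<in> pball X P x \<delta> r"
  then have y: "y \<in> X" and "P x y r < \<delta>" by (auto simp: pball_def)
  then have "P y x r \<le> \<delta>" using P_sym x r by simp
  have "P a y s = P a y ((s - r) + r)" by simp
  also have "\<dots> \<le> op (P a x (s - r)) (P y x r)"
    using P_triangle[of a y x "s - r" r] a x y r by simp
  also have "\<dots> \<le> op (P a x (s - r)) \<delta>"
    using op_mono_right P_nonneg \<open>P y x r \<le> \<delta>\<close> x y a r by simp
  finally show "y \<in> pball X P a \<alpha> s"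
    using small y by (simp add: pball_def)
qed

lemma pball_in_tau_P:
  assumes "P5 X P" and "binop_continuous op" and a: "a \<in> X" and s: "s > 0"
  shows "pball X P a \<alpha> s \<in> tau_P X P"
proof (rule tau_PI)
  show "pball X P a \<alpha> s \<subseteq> X" by (auto simp: pball_def)
  fix x assume "x \<in> pball X P a \<alpha> s"
  then have x: "x \<in> X" and less: "P a x s < \<alpha>" by (auto simp: pball_def)
  define d where "d = (\<lambda>n. inverse (real (Suc n)))"
  define r where "r n = s / 2 * d n" for n
  have d: "d \<longlonglongrightarrow> 0" "\<And>n. 0 < d n" "\<And>n. d n \<le> 1"
    unfolding d_def by (rule LIMSEQ_inverse_real_of_nat) (auto simp: field_simps)
  have r: "0 < r n" "r n < s" for n
    using mult_left_le[of "d n" "s/2"] d(2,3)[of n] s unfolding r_def by auto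
  have "r \<longlonglongrightarrow> 0"
    unfolding r_def using d(1) by (rule tendsto_mult_right_zero)
  then have "(\<lambda>n. s - r n) \<longlonglongrightarrow> s - 0"
    by (intro tendsto_diff tendsto_const)
  moreover have "isCont (P a x) s"
    using assms(1) a x s by (simp add: P5_def continuous_on_eq_continuous_at)
  ultimately have "(\<lambda>n. P a x (s - r n)) \<longlonglongrightarrow> P a x s"
    using isCont_tendsto_compose by fastforce
  moreover have "P a x (s - r n) \<ge> 0" for n
    using P_nonneg a x r[of n] by simp
  ultimately obtain N where "op (P a x (s - r N)) (d N) < \<alpha>"
    using binop_continuous_eventually_less[OF assms(2) binop_axioms _ d(1) _ _ less] d(2) less_imp_le
    by blast
  then have "pball X P x (d N) (r N) \<subseteq> pball X P a \<alpha> s"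
    using pball_subset_pball a x r by blast
  then show "\<exists>\<alpha>'>0. \<exists>t>0. pball X P x \<alpha>' t \<subseteq> pball X P a \<alpha> s"
    using d(2) r(1) by blast
qed

lemma istopology_tau_P: "istopology (\<lambda>A. A \<in> tau_P X P)"
  unfolding istopology_def
proof (intro conjI allI impI)
  fix S T assume S: "S \<in> tau_P X P" and T: "T \<in> tau_P X P"
  show "S \<inter> T \<in> tau_P X P"
  proof (rule tau_PI)
    show "S \<inter> T \<subseteq> X" using tau_P_subset[OF S] by blast
    fix a assume a: "a \<in> S \<inter> T"
    then have "a \<in> X" using tau_P_subset[OF S] by blast
    obtain \<alpha> s where "\<alpha> > 0" "s > 0" and S_ball: "pball X P a \<alpha> s \<subseteq> S"
      using tau_PD[OF S] a by blast
    obtain \<beta> t where "\<beta> > 0" "t > 0" and T_ball: "pball X P a \<beta> t \<subseteq> T"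
      using tau_PD[OF T] a by blast
    have "pball X P a (min \<alpha> \<beta>) (min s t) \<subseteq> pball X P a \<alpha> s"
      using \<open>a \<in> X\<close> \<open>t > 0\<close> \<open>s > 0\<close> by (intro pball_antimono) simp_all
    moreover have "pball X P a (min \<alpha> \<beta>) (min s t) \<subseteq> pball X P a \<beta> t"
      using \<open>a \<in> X\<close> \<open>t > 0\<close> \<open>s > 0\<close> by (intro pball_antimono) simp_all
    moreover have "min \<alpha> \<beta> > 0" "min s t > 0"
      using \<open>\<alpha> > 0\<close> \<open>\<beta> > 0\<close> \<open>s > 0\<close> \<open>t > 0\<close> by simp_all
    ultimately show "\<exists>\<gamma>>0. \<exists>r>0. pball X P a \<gamma> r \<subseteq> S \<inter> T"
      using S_ball T_ball by blast
  qed
next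
  fix \<K> assume \<K>: "\<forall>K\<in>\<K>. K \<in> tau_P X P"
  show "\<Union>\<K> \<in> tau_P X P"
  proof (rule tau_PI)
    show "\<Union>\<K> \<subseteq> X" using \<K> by (auto dest: tau_P_subset)
    fix a assume "a \<in> \<Union>\<K>"
    then obtain K where "K \<in> \<K>" "a \<in> K" by blast
    then have "\<exists>\<alpha>>0. \<exists>t>0. pball X P a \<alpha> t \<subseteq> K"
      using \<K> by (intro tau_PD) simp_all
    then show "\<exists>\<alpha>>0. \<exists>t>0. pball X P a \<alpha> t \<subseteq> \<Union>\<K>"
      using \<open>K \<in> \<K>\<close> by blast
  qed
qed

lemma openin_tau_P: "openin (topology (\<lambda>A. A \<in> tau_P X P)) = (\<lambda>A. A \<in> tau_P X P)"
  using istopology_tau_P by (simp add: topology_inverse')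

lemma topspace_tau_P: "topspace (topology (\<lambda>A. A \<in> tau_P X P)) = X"
proof -
  have "X \<in> tau_P X P"
    unfolding tau_P_def pball_def by (auto intro!: exI[of _ 1])
  then show ?thesis
    unfolding topspace_def openin_tau_P by (auto simp: tau_P_def)
qed

lemma pball_disjoint:
  assumes "a \<in> X" "b \<in> X" "s > 0" "\<delta> > 0" and small: "op \<delta> \<delta> < P a b (s + s)"
  shows "disjnt (pball X P a \<delta> s) (pball X P b \<delta> s)"
proof (rule ccontr)
  assume "\<not> ?thesis"
  then obtain c where c: "c \<in> X" "P a c s < \<delta>" "P b c s < \<delta>"
    by (auto simp: disjnt_def pball_def)
  have "P a b (s + s) \<le> op (P a c s) (P b c s)"
    using P_triangle[of a b c s s] assms c by simp
  also have "\<dots> \<le> op \<delta> (P b c s)"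
    using op_mono_left P_nonneg assms c by simp
  also have "\<dots> \<le> op \<delta> \<delta>"
    using op_mono_right P_nonneg assms c by simp
  finally show False using small by simp
qed

lemma Hausdorff_space_tau_P:
  assumes "P5 X P" and "binop_continuous op"
  shows "Hausdorff_space (topology (\<lambda>A. A \<in> tau_P X P))"
  unfolding Hausdorff_space_def topspace_tau_P openin_tau_P
proof (intro allI impI)
  fix a b assume "a \<in> X \<and> b \<in> X \<and> a \<noteq> b"
  then have a: "a \<in> X" and b: "b \<in> X" and "a \<noteq> b" by auto
  then obtain t where t: "t > 0" "P a b t > 0" using P_separates by blast
  obtain \<delta> where "\<delta> > 0" and "op \<delta> \<delta> < P a b (t/2 + t/2)"
    using exists_pos_op_self_less[OF assms(2) binop_axioms t(2)] by auto
  then have "disjnt (pball X P a \<delta> (t/2)) (pball X P b \<delta> (t/2))"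
    using pball_disjoint a b t(1) by simp
  moreover have "a \<in> pball X P a \<delta> (t/2)" "b \<in> pball X P b \<delta> (t/2)"
    using a b t(1) \<open>\<delta> > 0\<close> P_self by (auto simp: pball_def)
  ultimately show "\<exists>U V. U \<in> tau_P X P \<and> V \<in> tau_P X P \<and> a \<in> U \<and> b \<in> V \<and> disjnt U V"
    using pball_in_tau_P[OF assms] a b t(1) by (meson half_gt_zero)
qed

end

theorem mainTheorem7:
  fixes X :: "'a set" and P :: "'a \<Rightarrow> 'a \<Rightarrow> real \<Rightarrow> real" and op :: "real \<Rightarrow> real \<Rightarrow> real"
  assumes "gen_param_metric X P op" and "P5 X P" and "binop_continuous op"
  shows "istopology (\<lambda>A. A \<in> tau_P X P) \<and>
         topspace (topology (\<lambda>A. A \<in> tau_P X P)) = X \<and>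
         Hausdorff_space (topology (\<lambda>A. A \<in> tau_P X P))"
proof -
  interpret gen_param_metric_space X P op
    using assms(1) by unfold_locales
  show ?thesis
    using istopology_tau_P topspace_tau_P Hausdorff_space_tau_P[OF assms(2,3)] by blast
qed

end
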